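(* Let $m\ge3$ and $n\ge2$. For all $i,j\in[n]$ with $i\ne j$ and all $\alpha>0$, the tensor $\alpha(e^{(i)}-e^{(j)})^m+\alpha e^m$ belongs to $DNN_{m,n}\setminus CP_{m,n}$.
   Context: $e^{(i)}$ is the $i$th standard basis vector of $\mathbb{R}^n$ and $e=(1,\dots,1)^T\in\mathbb{R}^n$; $(u^m)_{i_1\ldots i_m}=u_{i_1}\cdots u_{i_m}$. $(\mathcal{A}x^{m-1})_i=\sum_{i_2,\dots,i_m}a_{ii_2\ldots i_m}x_{i_2}\cdots x_{i_m}$; an H-eigenvalue of $\mathcal{A}\in\mathbb{S}_{m,n}$ is $\lambda\in\mathbb{R}$ with $\mathcal{A}x^{m-1}=\lambda(x_i^{m-1})_i$ for some nonzero $x\in\mathbb{R}^n$. $DNN_{m,n}$ is the set of symmetric tensors with all entries nonnegative and all H-eigenvalues nonnegative. $CP_{m,n}$ is the set of tensors $\sum_{k=1}^r(u^{(k)})^m$ with $u^{(k)}\in\mathbb{R}^n_+$. *)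

theory Defs
  imports Complex_Main "HOL-Library.Multiset"
begin

text \<open>Order-m, dimension-n real tensors are functions on index lists of length m with
 entries in {0..<n} (0-based indices). Values outside this index set are irrelevant.
 Vectors in R^n are functions nat => real restricted to {0..<n}.\<close>

type_synonym tensor = "nat list \<Rightarrow> real"
type_synonym vec = "nat \<Rightarrow> real"

definition idx :: "nat \<Rightarrow> nat \<Rightarrow> nat list set" where
  "idx m n = {is. length is = m \<and> set is \<subseteq> {..<n}}"

definition std_basis :: "nat \<Rightarrow> vec" where
  "std_basis i = (\<lambda>k. if k = i then 1 else 0)"

definition ones :: vec where
  "ones = (\<lambda>k. 1)"

definition tpow :: "vec \<Rightarrow> tensor" where
  "tpow u = (\<lambda>is. prod_list (map u is))"

definition symmetric_tensor :: "nat \<Rightarrow> nat \<Rightarrow> tensor \<Rightarrow> bool" where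
  "symmetric_tensor m n A \<longleftrightarrow>
     (\<forall>is\<in>idx m n. \<forall>js\<in>idx m n. mset is = mset js \<longrightarrow> A is = A js)"

definition tensor_apply :: "nat \<Rightarrow> nat \<Rightarrow> tensor \<Rightarrow> vec \<Rightarrow> nat \<Rightarrow> real" where
  "tensor_apply m n A x i = (\<Sum>js\<in>idx (m - 1) n. A (i # js) * prod_list (map x js))"

definition H_eigenvalue :: "nat \<Rightarrow> nat \<Rightarrow> tensor \<Rightarrow> real \<Rightarrow> bool" where
  "H_eigenvalue m n A lam \<longleftrightarrow>
     (\<exists>x::vec. (\<exists>i<n. x i \<noteq> 0) \<and>
        (\<forall>i<n. tensor_apply m n A x i = lam * x i ^ (m - 1)))"

definition DNN :: "nat \<Rightarrow> nat \<Rightarrow> tensor \<Rightarrow> bool" where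
  "DNN m n A \<longleftrightarrow> symmetric_tensor m n A \<and> (\<forall>is\<in>idx m n. A is \<ge> 0) \<and>
     (\<forall>lam. H_eigenvalue m n A lam \<longrightarrow> lam \<ge> 0)"

definition CP :: "nat \<Rightarrow> nat \<Rightarrow> tensor \<Rightarrow> bool" where
  "CP m n A \<longleftrightarrow> (\<exists>(r::nat) (u::nat \<Rightarrow> vec).
     (\<forall>k<r. \<forall>i<n. u k i \<ge> 0) \<and>
     (\<forall>is\<in>idx m n. A is = (\<Sum>k<r. tpow (u k) is)))"

end

theory Submission
  imports Defs
begin

text \<open>Let d = e(i) - e(j) and A = \<alpha> d^m + \<alpha> e^m. Contracting a rank-one tensor
  gives u^m x^(m-1) = (u\<bullet>x)^(m-1) u, so an H-eigenpair satisfies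
  \<alpha> (d\<bullet>x)^(m-1) d + \<alpha> (e\<bullet>x)^(m-1) e = \<lambda> x^[m-1]. For even m, pairing with x gives
  \<lambda> \<Sigma> x_k^m = \<alpha> (d\<bullet>x)^m + \<alpha> (e\<bullet>x)^m \<ge> 0. For odd m, in row i (where d_i = e_i = 1) the
  left side is nonnegative, so \<lambda> < 0 forces both powers to vanish and then x = 0.
  A is not completely positive: its entry at (i,...,i,j) is 0, so every nonnegative
  rank-one summand u^m has u_i = 0 or u_j = 0 and hence vanishes at (i,...,i,j,j),
  where A equals 2\<alpha> > 0.\<close>

lemma idx_0 [simp]: "idx 0 n = {[]}"
  by (auto simp: idx_def)

lemma idx_Suc: "idx (Suc p) n = (\<lambda>(a, js). a # js) ` ({..<n} \<times> idx p n)"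
  by (auto simp: idx_def image_iff length_Suc_conv)

lemma sum_idx_prod_list:
  "(\<Sum>js\<in>idx p n. prod_list (map f js)) = (\<Sum>l<n. f l :: real) ^ p"
proof (induction p)
  case 0
  then show ?case by simp
next
  case (Suc p)
  have inj: "inj_on (\<lambda>(a, js). a # js) ({..<n} \<times> idx p n)"
    by (auto simp: inj_on_def)
  have "(\<Sum>js\<in>idx (Suc p) n. prod_list (map f js))
      = (\<Sum>(a, js)\<in>{..<n} \<times> idx p n. f a * prod_list (map f js))"
    unfolding idx_Suc sum.reindex[OF inj] by (simp add: split_def)
  also have "\<dots> = (\<Sum>a<n. f a) * (\<Sum>js\<in>idx p n. prod_list (map f js))"
    by (simp add: sum.cartesian_product[symmetric] sum_product)
  finally show ?case using Suc by simp
qed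

lemma tpow_mset_eq: "mset is = mset js \<Longrightarrow> tpow u is = tpow u js"
  unfolding tpow_def by (metis mset_map prod_mset_prod_list)

lemma tpow_Cons [simp]: "tpow u (k # js) = u k * tpow u js"
  by (simp add: tpow_def)

lemma tpow_ones: "tpow ones js = 1"
  by (induction js) (simp_all add: tpow_def ones_def)

lemma abs_tpow_le_1: "(\<And>k. \<bar>u k\<bar> \<le> 1) \<Longrightarrow> \<bar>tpow u js\<bar> \<le> 1"
  by (induction js) (auto simp: tpow_def abs_mult intro: mult_le_one)

lemma symmetric_tensor_tpow_comb:
  "symmetric_tensor m n (\<lambda>is. a * tpow u is + b * tpow v is)"
  unfolding symmetric_tensor_def by (metis tpow_mset_eq)

lemma tensor_apply_tpow_comb:
  "tensor_apply m n (\<lambda>is. a * tpow u is + b * tpow v is) x k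
     = a * u k * (\<Sum>l<n. u l * x l) ^ (m - 1) + b * v k * (\<Sum>l<n. v l * x l) ^ (m - 1)"
proof -
  have tpow_times: "tpow w js * prod_list (map x js) = prod_list (map (\<lambda>l. w l * x l) js)"
    for w js by (induction js) (simp_all add: tpow_def)
  have "tensor_apply m n (\<lambda>is. a * tpow u is + b * tpow v is) x k
      = (\<Sum>js\<in>idx (m - 1) n. a * u k * prod_list (map (\<lambda>l. u l * x l) js)
                            + b * v k * prod_list (map (\<lambda>l. v l * x l) js))"
    unfolding tensor_apply_def
    by (rule sum.cong) (simp_all add: algebra_simps flip: tpow_times)
  then show ?thesis
    by (simp add: sum.distrib flip: sum_distrib_left sum_idx_prod_list)
qed

lemma H_eigenvalue_tpow_comb_even_nonneg:
  assumes "H_eigenvalue m n (\<lambda>is. a * tpow u is + b * tpow v is) lam"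
    and "even m" and "m \<noteq> 0" and "a \<ge> 0" and "b \<ge> 0"
  shows "lam \<ge> 0"
proof -
  define s where "s x = (\<Sum>l<n. u l * x l)" for x :: vec
  define t where "t x = (\<Sum>l<n. v l * x l)" for x :: vec
  obtain x k where "k < n" "x k \<noteq> 0"
    and ev: "\<And>k. k < n \<Longrightarrow> a * u k * s x ^ (m - 1) + b * v k * t x ^ (m - 1) = lam * x k ^ (m - 1)"
    using assms(1) by (auto simp: H_eigenvalue_def tensor_apply_tpow_comb s_def t_def)
  have pow_Suc: "y * y ^ (m - 1) = y ^ m" for y :: real
    using \<open>m \<noteq> 0\<close> by (simp flip: power_Suc)
  have "lam * (\<Sum>l<n. x l ^ m) = (\<Sum>l<n. x l * (lam * x l ^ (m - 1)))"
    by (simp add: sum_distrib_left algebra_simps flip: pow_Suc)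
  also have "\<dots> = (\<Sum>l<n. x l * (a * u l * s x ^ (m - 1) + b * v l * t x ^ (m - 1)))"
    using ev by (intro sum.cong) auto
  also have "\<dots> = a * (s x * s x ^ (m - 1)) + b * (t x * t x ^ (m - 1))"
    by (simp add: s_def t_def sum.distrib sum_distrib_left sum_distrib_right algebra_simps)
  also have "\<dots> = a * s x ^ m + b * t x ^ m"
    by (simp only: pow_Suc)
  also have "\<dots> \<ge> 0"
    using assms by (simp add: zero_le_even_power)
  finally have "lam * (\<Sum>l<n. x l ^ m) \<ge> 0" .
  moreover have "(\<Sum>l<n. x l ^ m) > 0"
  proof (rule sum_pos2)
    show "x k ^ m > 0"
      using \<open>x k \<noteq> 0\<close> \<open>even m\<close> by (simp add: zero_less_power_eq)
  qed (use \<open>k < n\<close> \<open>even m\<close> in \<open>auto simp: zero_le_even_power\<close>)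
  ultimately show ?thesis
    by (simp add: zero_le_mult_iff)
qed

lemma H_eigenvalue_tpow_comb_odd_nonneg:
  assumes "H_eigenvalue m n (\<lambda>is. a * tpow u is + b * tpow v is) lam"
    and "odd m" and "i < n" and "a * u i > 0" and "b * v i > 0"
  shows "lam \<ge> 0"
proof (rule ccontr)
  assume "\<not> lam \<ge> 0"
  define s where "s x = (\<Sum>l<n. u l * x l)" for x :: vec
  define t where "t x = (\<Sum>l<n. v l * x l)" for x :: vec
  obtain x k where "k < n" "x k \<noteq> 0"
    and ev: "\<And>k. k < n \<Longrightarrow> a * u k * s x ^ (m - 1) + b * v k * t x ^ (m - 1) = lam * x k ^ (m - 1)"
    using assms(1) by (auto simp: H_eigenvalue_def tensor_apply_tpow_comb s_def t_def)
  have "even (m - 1)"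
    using \<open>odd m\<close> by simp
  then have pos: "s x ^ (m - 1) \<ge> 0" "t x ^ (m - 1) \<ge> 0" "x i ^ (m - 1) \<ge> 0"
    by (simp_all add: zero_le_even_power)
  have "lam * x i ^ (m - 1) \<le> 0"
    using \<open>\<not> lam \<ge> 0\<close> pos(3) by (intro mult_nonpos_nonneg) auto
  moreover have "a * u i * s x ^ (m - 1) \<ge> 0" "b * v i * t x ^ (m - 1) \<ge> 0"
    using assms(4,5) pos(1,2) by simp_all
  ultimately have "a * u i * s x ^ (m - 1) = 0" "b * v i * t x ^ (m - 1) = 0"
    using ev[OF \<open>i < n\<close>] by linarith+
  then have s0: "s x ^ (m - 1) = 0" and t0: "t x ^ (m - 1) = 0"
    using assms(4,5) by (metis mult_eq_0_iff less_irrefl)+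
  have "lam * x k ^ (m - 1) = 0"
    using ev[OF \<open>k < n\<close>] unfolding s0 t0 by simp
  with \<open>\<not> lam \<ge> 0\<close> \<open>x k \<noteq> 0\<close> show False
    by simp
qed

lemma H_eigenvalue_tpow_comb_nonneg:
  assumes "H_eigenvalue m n (\<lambda>is. a * tpow u is + b * tpow v is) lam"
    and "m \<noteq> 0" and "i < n" and "a > 0" and "b > 0" and "u i > 0" and "v i > 0"
  shows "lam \<ge> 0"
proof (cases "even m")
  case True
  with assms show ?thesis
    by (intro H_eigenvalue_tpow_comb_even_nonneg[OF assms(1)]) simp_all
next
  case False
  with assms show ?thesis
    by (intro H_eigenvalue_tpow_comb_odd_nonneg[OF assms(1) False \<open>i < n\<close>]) simp_all
qed

lemma CP_entry_zero_propagates: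
  assumes "CP m n A" and "m \<ge> 3" and "i < n" and "j < n"
    and "A (replicate (m - 1) i @ [j]) = 0"
  shows "A (replicate (m - 2) i @ [j, j]) = 0"
proof -
  obtain r :: nat and u :: "nat \<Rightarrow> vec" where u_nonneg: "\<forall>k<r. \<forall>l<n. u k l \<ge> 0"
    and A_eq: "\<forall>is\<in>idx m n. A is = (\<Sum>k<r. tpow (u k) is)"
    using assms(1) unfolding CP_def by blast
  have mem: "replicate (m - 1) i @ [j] \<in> idx m n" "replicate (m - 2) i @ [j, j] \<in> idx m n"
    using assms(2-4) by (auto simp: idx_def)
  have "(\<Sum>k<r. u k i ^ (m - 1) * u k j) = 0"
    using bspec[OF A_eq mem(1)] assms(5) by (simp add: tpow_def)
  then have "\<forall>k\<in>{..<r}. u k i ^ (m - 1) * u k j = 0"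
    by (subst (asm) sum_nonneg_eq_0_iff) (auto simp: u_nonneg assms(3,4))
  then have "tpow (u k) (replicate (m - 2) i @ [j, j]) = 0" if "k < r" for k
    using that \<open>m \<ge> 3\<close> by (auto simp: tpow_def)
  then show ?thesis
    using bspec[OF A_eq mem(2)] by simp
qed

theorem mainTheorem16:
  fixes m n i j :: nat and \<alpha> :: real
  assumes "m \<ge> 3" and "n \<ge> 2" and "i < n" and "j < n" and "i \<noteq> j" and "\<alpha> > 0"
  shows "DNN m n (\<lambda>is. \<alpha> * tpow (\<lambda>k. std_basis i k - std_basis j k) is + \<alpha> * tpow ones is)
       \<and> \<not> CP m n (\<lambda>is. \<alpha> * tpow (\<lambda>k. std_basis i k - std_basis j k) is + \<alpha> * tpow ones is)"
proof -
  define d where "d = (\<lambda>k. std_basis i k - std_basis j k)"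
  define A where "A = (\<lambda>is. \<alpha> * tpow d is + \<alpha> * tpow ones is)"
  have d_i: "d i = 1" and d_j: "d j = -1" and ones: "ones i = 1" "ones j = 1"
    using \<open>i \<noteq> j\<close> by (simp_all add: d_def std_basis_def ones_def)
  have nonneg: "A is \<ge> 0" for "is"
  proof -
    have "\<bar>tpow d is\<bar> \<le> 1"
      by (rule abs_tpow_le_1) (simp add: d_def std_basis_def)
    then have "tpow d is + 1 \<ge> 0"
      by linarith
    with \<open>\<alpha> > 0\<close> have "\<alpha> * (tpow d is + 1) \<ge> 0"
      by simp
    then show ?thesis
      by (simp add: A_def tpow_ones algebra_simps)
  qed
  have eigenvalues_nonneg: "lam \<ge> 0" if "H_eigenvalue m n A lam" for lam
    using H_eigenvalue_tpow_comb_nonneg[OF that[unfolded A_def], of i] assms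
    by (simp add: d_i ones)
  have "DNN m n A"
    unfolding DNN_def using symmetric_tensor_tpow_comb nonneg eigenvalues_nonneg
    by (simp add: A_def)
  moreover have "\<not> CP m n A"
  proof
    assume "CP m n A"
    moreover have "A (replicate (m - 1) i @ [j]) = 0"
      by (simp add: A_def tpow_def d_i d_j ones)
    ultimately have "A (replicate (m - 2) i @ [j, j]) = 0"
      using CP_entry_zero_propagates assms by simp
    then show False
      using \<open>\<alpha> > 0\<close> by (simp add: A_def tpow_def d_i d_j ones)
  qed
  ultimately show ?thesis
    unfolding A_def d_def by blast
qed

end
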